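(* Let $\alpha:\{0,1,2\}^*\to\{0,1,2\}^*$ be the $31$-uniform morphism defined by $\alpha(0)=0121021201020120210201021201210$, $\alpha(1)=1202102012101201021012102012021$, $\alpha(2)=2010210120212012102120210120102$. Then each $\alpha(a)$ is a palindrome, $\alpha(0)=z^R0z$ with $z=210201021201210$, and the infinite fixed point $\alpha^\omega(0)$ contains no factor that is a $(p/q)$-power with $p/q>\tfrac74$.
   Context: A word $x=x[1..n]$ has period $q$ if $x[i]=x[i+q]$ for $1\le i\le n-q$. For integers $p>q\ge1$, $x$ is a $(p/q)$-power if it has length $p$ and period $q$. $z^R$ denotes the reversal of $z$. The fixed point $\alpha^\omega(0)$ is the infinite word having every $\alpha^n(0)$ as a prefix. *)

theory Defs
  imports Complex_Main
begin

text \<open>Words over the alphabet {0,1,2} are represented as lists of naturals.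
  The image of a letter under alpha; letters outside {0,1,2} never occur.\<close>
definition alpha_letter :: "nat \<Rightarrow> nat list" where
  "alpha_letter a =
    (if a = 0 then [0,1,2,1,0,2,1,2,0,1,0,2,0,1,2,0,2,1,0,2,0,1,0,2,1,2,0,1,2,1,0]
     else if a = 1 then [1,2,0,2,1,0,2,0,1,2,1,0,1,2,0,1,0,2,1,0,1,2,1,0,2,0,1,2,0,2,1]
     else [2,0,1,0,2,1,0,1,2,0,2,1,2,0,1,2,1,0,2,1,2,0,2,1,0,1,2,0,1,0,2])"

definition alpha :: "nat list \<Rightarrow> nat list" where
  "alpha w = concat (map alpha_letter w)"

definition has_period :: "'a list \<Rightarrow> nat \<Rightarrow> bool" where
  "has_period x q \<longleftrightarrow> (\<forall>i. 1 \<le> i \<and> i \<le> length x - q \<longrightarrow> x ! (i - 1) = x ! (i - 1 + q))"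

definition is_frac_power :: "'a list \<Rightarrow> nat \<Rightarrow> nat \<Rightarrow> bool" where
  "is_frac_power x p q \<longleftrightarrow> p > q \<and> q \<ge> 1 \<and> length x = p \<and> has_period x q"

definition factor_at :: "(nat \<Rightarrow> 'a) \<Rightarrow> nat \<Rightarrow> nat \<Rightarrow> 'a list" where
  "factor_at w i l = map (\<lambda>k. w (i + k)) [0..<l]"

end

theory Submission
  imports Defs
begin

text \<open>Each block \<open>\<alpha>(a)\<close> is \<open>\<alpha>(0)\<close> with every letter shifted by \<open>a\<close> modulo 3, so a letter at a
  known position of a block determines the block. Suppose the fixed point has a factor of length
  \<open>l\<close> and period \<open>q\<close> with \<open>4l > 7q\<close>. Periods \<open>q < 14\<close> are excluded by inspecting every window
  inside two consecutive blocks. For larger \<open>q\<close> the factor is at least \<open>q + 11\<close> long, and a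
  finite check shows that the digrams occurring inside blocks locate the block boundaries within
  ten letters; hence the two copies of the repeated part lie at the same offset modulo 31, i.e.
  \<open>31 | q\<close>. The factor then desubstitutes to a factor with period \<open>q/31\<close> whose length is still
  more than \<open>7/4\<close> of its period, and induction on \<open>q\<close> concludes.\<close>

definition periodic_factor :: "(nat \<Rightarrow> 'a) \<Rightarrow> nat \<Rightarrow> nat \<Rightarrow> nat \<Rightarrow> bool" where
  "periodic_factor w s l q \<longleftrightarrow> (\<forall>k. k + q < l \<longrightarrow> w (s + k) = w (s + k + q))"

lemma has_period_factor_at_iff: "has_period (factor_at w s l) q \<longleftrightarrow> periodic_factor w s l q"
  unfolding has_period_def periodic_factor_def
proof (intro iffI allI impI)
  fix k assume "\<forall>i. 1 \<le> i \<and> i \<le> length (factor_at w s l) - q \<longrightarrow>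
      factor_at w s l ! (i - 1) = factor_at w s l ! (i - 1 + q)" and "k + q < l"
  then show "w (s + k) = w (s + k + q)"
    by (auto simp: factor_at_def add.assoc dest: spec[of _ "Suc k"])
next
  fix i assume "\<forall>k. k + q < l \<longrightarrow> w (s + k) = w (s + k + q)"
    and "1 \<le> i \<and> i \<le> length (factor_at w s l) - q"
  then show "factor_at w s l ! (i - 1) = factor_at w s l ! (i - 1 + q)"
    by (auto simp: factor_at_def add.assoc dest: spec[of _ "i - 1"])
qed

lemma length_alpha_letter [simp]: "length (alpha_letter a) = 31"
  by (simp add: alpha_letter_def)

lemma alpha_letter_nth_less_3: "k < 31 \<Longrightarrow> alpha_letter a ! k < 3"
proof -
  assume "k < 31"
  then have "alpha_letter a ! k \<in> set (alpha_letter a)" by simp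
  then show ?thesis by (auto simp: alpha_letter_def)
qed

lemma alpha_letter_first_last: "a < 3 \<Longrightarrow> alpha_letter a ! 0 = a \<and> alpha_letter a ! 30 = a"
  by (auto simp: alpha_letter_def less_Suc_eq numeral_eq_Suc)

text \<open>The finite checks are stated with \<open>list_all\<close>/\<open>list_ex\<close> over \<open>[0..<n]\<close> because
  \<open>code_simp\<close> evaluates bounded quantifiers over \<open>nat\<close> far more slowly.\<close>

lemma alpha_letter_adjacent_distinct:
  assumes "a < 3" "k < 30"
  shows "alpha_letter a ! k \<noteq> alpha_letter a ! Suc k"
proof -
  have "list_all (\<lambda>a. list_all (\<lambda>k. alpha_letter a ! k \<noteq> alpha_letter a ! Suc k) [0..<30]) [0..<3]"
    by code_simp
  then have "\<forall>a\<in>{0..<3}. \<forall>k\<in>{0..<30}. alpha_letter a ! k \<noteq> alpha_letter a ! Suc k"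
    by (simp only: list_all_iff set_upt)
  with assms show ?thesis by simp
qed

lemma alpha_letter_nth_inject:
  assumes "a < 3" "b < 3" "k < 31" "alpha_letter a ! k = alpha_letter b ! k"
  shows "a = b"
proof -
  have "list_all (\<lambda>a. list_all (\<lambda>b. a = b \<or>
      list_all (\<lambda>k. alpha_letter a ! k \<noteq> alpha_letter b ! k) [0..<31]) [0..<3]) [0..<3]"
    by code_simp
  then have "\<forall>a\<in>{0..<3}. \<forall>b\<in>{0..<3}. a = b \<or>
      (\<forall>k\<in>{0..<31}. alpha_letter a ! k \<noteq> alpha_letter b ! k)"
    by (simp only: list_all_iff set_upt)
  with assms show ?thesis by (meson atLeastLessThan_iff zero_le)
qed

lemma two_blocks_no_short_period:
  assumes "a < 3" "b < 3" "a \<noteq> b" "r < 31" "1 \<le> q" "q < 14"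
  shows "\<exists>k < 7 * q div 4 + 1 - q.
    (alpha_letter a @ alpha_letter b) ! (r + k) \<noteq> (alpha_letter a @ alpha_letter b) ! (r + k + q)"
proof -
  have "list_all (\<lambda>a. list_all (\<lambda>b. a = b \<or> list_all (\<lambda>r. list_all (\<lambda>q.
      list_ex (\<lambda>k. (alpha_letter a @ alpha_letter b) ! (r + k) \<noteq>
        (alpha_letter a @ alpha_letter b) ! (r + k + q)) [0..<7 * q div 4 + 1 - q])
      [1..<14]) [0..<31]) [0..<3]) [0..<3]"
    by code_simp
  then have "\<forall>a\<in>{0..<3}. \<forall>b\<in>{0..<3}. a = b \<or> (\<forall>r\<in>{0..<31}. \<forall>q\<in>{1..<14}.
      \<exists>k\<in>{0..<7 * q div 4 + 1 - q}. (alpha_letter a @ alpha_letter b) ! (r + k) \<noteq>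
        (alpha_letter a @ alpha_letter b) ! (r + k + q))"
    by (simp only: list_all_iff list_ex_iff set_upt)
  then have "\<exists>k\<in>{0..<7 * q div 4 + 1 - q}. (alpha_letter a @ alpha_letter b) ! (r + k) \<noteq>
      (alpha_letter a @ alpha_letter b) ! (r + k + q)"
    using assms by (meson atLeastLessThan_iff zero_le)
  then show ?thesis by auto
qed

lemma alpha_letter_digrams_synchronize:
  assumes "r < 31" "r' < 31" "r \<noteq> r'"
  shows "\<exists>k<10. (r + k) mod 31 < 30 \<and> (r' + k) mod 31 < 30 \<and> (\<forall>a<3. \<forall>a'<3.
    alpha_letter a ! ((r + k) mod 31) \<noteq> alpha_letter a' ! ((r' + k) mod 31) \<or>
    alpha_letter a ! Suc ((r + k) mod 31) \<noteq> alpha_letter a' ! Suc ((r' + k) mod 31))"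
proof -
  have "list_all (\<lambda>r. list_all (\<lambda>r'. r = r' \<or> list_ex (\<lambda>k.
      (r + k) mod 31 < 30 \<and> (r' + k) mod 31 < 30 \<and> list_all (\<lambda>a. list_all (\<lambda>a'.
        alpha_letter a ! ((r + k) mod 31) \<noteq> alpha_letter a' ! ((r' + k) mod 31) \<or>
        alpha_letter a ! Suc ((r + k) mod 31) \<noteq> alpha_letter a' ! Suc ((r' + k) mod 31))
      [0..<3]) [0..<3]) [0..<10]) [0..<31]) [0..<31]"
    by code_simp
  then have "\<forall>r\<in>{0..<31}. \<forall>r'\<in>{0..<31}. r = r' \<or> (\<exists>k\<in>{0..<10}.
      (r + k) mod 31 < 30 \<and> (r' + k) mod 31 < 30 \<and> (\<forall>a\<in>{0..<3}. \<forall>a'\<in>{0..<3}.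
        alpha_letter a ! ((r + k) mod 31) \<noteq> alpha_letter a' ! ((r' + k) mod 31) \<or>
        alpha_letter a ! Suc ((r + k) mod 31) \<noteq> alpha_letter a' ! Suc ((r' + k) mod 31)))"
    by (simp only: list_all_iff list_ex_iff set_upt)
  then have "\<exists>k\<in>{0..<10}.
      (r + k) mod 31 < 30 \<and> (r' + k) mod 31 < 30 \<and> (\<forall>a\<in>{0..<3}. \<forall>a'\<in>{0..<3}.
        alpha_letter a ! ((r + k) mod 31) \<noteq> alpha_letter a' ! ((r' + k) mod 31) \<or>
        alpha_letter a ! Suc ((r + k) mod 31) \<noteq> alpha_letter a' ! Suc ((r' + k) mod 31))"
    using assms by (meson atLeastLessThan_iff zero_le)
  then show ?thesis by auto
qed

locale alpha_fixpoint =
  fixes w :: "nat \<Rightarrow> nat"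
  assumes w_block: "k < 31 \<Longrightarrow> w (31 * j + k) = alpha_letter (w j) ! k"
begin

lemma w_nth: "w n = alpha_letter (w (n div 31)) ! (n mod 31)"
  using w_block[of "n mod 31" "n div 31"] by simp

lemma w_less_3: "w n < 3"
  using w_nth[of n] alpha_letter_nth_less_3[of "n mod 31"] by simp

lemma w_Suc_nth: "n mod 31 < 30 \<Longrightarrow> w (Suc n) = alpha_letter (w (n div 31)) ! Suc (n mod 31)"
  using w_block[of "Suc (n mod 31)" "n div 31"] by (simp add: mult.commute)

lemma w_two_blocks: "n < 62 \<Longrightarrow> w (31 * j + n) = (alpha_letter (w j) @ alpha_letter (w (Suc j))) ! n"
  using w_block[of n j] w_block[of "n - 31" "Suc j"] by (auto simp: nth_append)

lemma w_adjacent_distinct: "w n \<noteq> w (Suc n)"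
proof (induction n rule: less_induct)
  case (less n)
  show ?case
  proof (cases "n mod 31 < 30")
    case True
    then show ?thesis
      using w_nth[of n] w_Suc_nth[OF True] alpha_letter_adjacent_distinct[OF w_less_3 True] by simp
  next
    case False
    define m where "m = n div 31"
    have "n mod 31 = 30" using False mod_less_divisor[of 31 n] by linarith
    then have n: "n = 31 * m + 30" using mult_div_mod_eq[of 31 n] by (simp add: m_def)
    then have "Suc n = 31 * Suc m + 0" by simp
    then have "w (Suc n) = alpha_letter (w (Suc m)) ! 0" by (simp only: w_block)
    moreover have "w n = alpha_letter (w m) ! 30" using n w_block[of 30 m] by simp
    ultimately have "w n = w m" "w (Suc n) = w (Suc m)"
      using alpha_letter_first_last[OF w_less_3] by simp_all
    moreover have "m < n" using n by simp
    ultimately show ?thesis using less.IH by metis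
  qed
qed

lemma short_period_bound:
  assumes "periodic_factor w s l q" "1 \<le> q" "q < 14"
  shows "4 * l \<le> 7 * q"
proof (rule ccontr)
  assume "\<not> 4 * l \<le> 7 * q"
  then have l: "7 * q div 4 < l" by linarith
  define j r where "j = s div 31" and "r = s mod 31"
  have s: "s = 31 * j + r" and "r < 31" by (auto simp: j_def r_def)
  obtain k where k: "k < 7 * q div 4 + 1 - q"
    "(alpha_letter (w j) @ alpha_letter (w (Suc j))) ! (r + k) \<noteq>
     (alpha_letter (w j) @ alpha_letter (w (Suc j))) ! (r + k + q)"
    using two_blocks_no_short_period[OF w_less_3 w_less_3 w_adjacent_distinct \<open>r < 31\<close> assms(2,3)]
    by blast
  have "r + k + q < 62" using k(1) \<open>r < 31\<close> \<open>q < 14\<close> by linarith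
  then have "w (s + k) \<noteq> w (s + k + q)"
    using k(2) w_two_blocks[of "r + k" j] w_two_blocks[of "r + k + q" j] by (simp add: s add.assoc)
  moreover have "k + q < l" using k(1) l by linarith
  ultimately show False using assms(1) by (simp add: periodic_factor_def)
qed

lemma periodic_factor_synchronizes:
  assumes "periodic_factor w s l q" "q + 11 \<le> l"
  shows "31 dvd q"
proof (rule ccontr)
  assume "\<not> 31 dvd q"
  define r r' where "r = s mod 31" and "r' = (s + q) mod 31"
  have "r \<noteq> r'"
    using \<open>\<not> 31 dvd q\<close> mod_eq_dvd_iff_nat[of s "s + q" 31] by (auto simp: r_def r'_def)
  then obtain k where "k < 10" and k: "(r + k) mod 31 < 30" "(r' + k) mod 31 < 30"
    "\<And>a a'. a < 3 \<Longrightarrow> a' < 3 \<Longrightarrow>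
      alpha_letter a ! ((r + k) mod 31) \<noteq> alpha_letter a' ! ((r' + k) mod 31) \<or>
      alpha_letter a ! Suc ((r + k) mod 31) \<noteq> alpha_letter a' ! Suc ((r' + k) mod 31)"
    using alpha_letter_digrams_synchronize[of r r'] by (auto simp: r_def r'_def)
  define n n' where "n = s + k" and "n' = s + k + q"
  have offsets: "n mod 31 = (r + k) mod 31" "n' mod 31 = (r' + k) mod 31"
    by (simp_all add: n_def n'_def r_def r'_def mod_add_left_eq mod_add_right_eq add_ac)
  have "k + q < l" "Suc k + q < l" using assms(2) \<open>k < 10\<close> by linarith+
  then have "w (s + k) = w (s + k + q)" "w (s + Suc k) = w (s + Suc k + q)"
    using assms(1) unfolding periodic_factor_def by blast+
  then have "w n = w n'" "w (Suc n) = w (Suc n')" by (simp_all add: n_def n'_def)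
  moreover have "w n = alpha_letter (w (n div 31)) ! ((r + k) mod 31)"
    "w (Suc n) = alpha_letter (w (n div 31)) ! Suc ((r + k) mod 31)"
    "w n' = alpha_letter (w (n' div 31)) ! ((r' + k) mod 31)"
    "w (Suc n') = alpha_letter (w (n' div 31)) ! Suc ((r' + k) mod 31)"
    using w_nth[of n] w_Suc_nth[of n] w_nth[of n'] w_Suc_nth[of n'] k(1,2) offsets by simp_all
  moreover have "alpha_letter (w (n div 31)) ! ((r + k) mod 31) \<noteq>
      alpha_letter (w (n' div 31)) ! ((r' + k) mod 31) \<or>
    alpha_letter (w (n div 31)) ! Suc ((r + k) mod 31) \<noteq>
      alpha_letter (w (n' div 31)) ! Suc ((r' + k) mod 31)"
    using k(3) w_less_3 by blast
  ultimately show False by argo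
qed

lemma periodic_factor_desubstitute:
  assumes "periodic_factor w s l (31 * q)"
  shows "\<exists>s' l'. l \<le> 31 * l' \<and> periodic_factor w s' l' q"
proof (cases "l \<le> 31 * q")
  case True
  then show ?thesis by (auto simp: periodic_factor_def)
next
  case False
  define m where "m = l - 31 * q"
  define j0 j1 where "j0 = s div 31" and "j1 = (s + m - 1) div 31"
  have "m \<ge> 1" using False by (simp add: m_def)
  have "31 * j0 \<le> s" "s + m - 1 < 31 * j1 + 31" "j0 \<le> j1"
    using \<open>m \<ge> 1\<close> by (auto simp: j0_def j1_def intro: div_le_mono)
  then have "l \<le> 31 * (j1 - j0 + 1 + q)" by (simp add: m_def)
  moreover have "periodic_factor w j0 (j1 - j0 + 1 + q) q"
    unfolding periodic_factor_def
  proof (intro allI impI)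
    fix k assume "k + q < j1 - j0 + 1 + q"
    define j where "j = j0 + k"
    define n where "n = max s (31 * j)"
    have "j \<le> j1" "j0 \<le> j" using \<open>k + q < j1 - j0 + 1 + q\<close> \<open>j0 \<le> j1\<close> by (auto simp: j_def)
    then have "s \<le> n" "n < s + m" "n div 31 = j"
      using \<open>m \<ge> 1\<close> by (auto simp: n_def j0_def j1_def max_def)
    then have "n - s + 31 * q < l" by (simp add: m_def)
    then have "w (s + (n - s)) = w (s + (n - s) + 31 * q)"
      using assms by (simp add: periodic_factor_def)
    then have "w n = w (n + 31 * q)" using \<open>s \<le> n\<close> by simp
    have "31 * j + n mod 31 = n" using mult_div_mod_eq[of 31 n] \<open>n div 31 = j\<close> by simp
    then have "n + 31 * q = 31 * j + n mod 31 + 31 * q" by simp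
    also have "\<dots> = 31 * (j + q) + n mod 31" by (simp add: distrib_left)
    finally have "w (n + 31 * q) = alpha_letter (w (j + q)) ! (n mod 31)"
      by (simp only: w_block mod_less_divisor zero_less_numeral)
    moreover have "w n = alpha_letter (w j) ! (n mod 31)"
      using w_nth[of n] \<open>n div 31 = j\<close> by simp
    ultimately have "alpha_letter (w j) ! (n mod 31) = alpha_letter (w (j + q)) ! (n mod 31)"
      using \<open>w n = w (n + 31 * q)\<close> by simp
    then have "w j = w (j + q)"
      by (rule alpha_letter_nth_inject[OF w_less_3 w_less_3, rotated]) simp
    then show "w (j0 + k) = w (j0 + k + q)" by (simp add: j_def)
  qed
  ultimately show ?thesis by blast
qed

theorem periodic_factor_length_bound:
  "periodic_factor w s l q \<Longrightarrow> 1 \<le> q \<Longrightarrow> 4 * l \<le> 7 * q"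
proof (induction q arbitrary: s l rule: less_induct)
  case (less q)
  show ?case
  proof (rule ccontr)
    assume long: "\<not> 4 * l \<le> 7 * q"
    then have "14 \<le> q" using short_period_bound less.prems by force
    then have "q + 11 \<le> l" using long by linarith
    then obtain q' where q: "q = 31 * q'"
      using periodic_factor_synchronizes less.prems(1) by blast
    then obtain s' l' where "l \<le> 31 * l'" "periodic_factor w s' l' q'"
      using periodic_factor_desubstitute less.prems(1) by blast
    moreover have "q' < q" "1 \<le> q'" using q less.prems(2) by auto
    ultimately have "4 * l' \<le> 7 * q'" using less.IH by blast
    then show False using long q \<open>l \<le> 31 * l'\<close> by linarith
  qed
qed

end

lemma length_alpha: "length (alpha u) = 31 * length u"
  by (induction u) (simp_all add: alpha_def)

lemma nth_alpha: "j < length u \<Longrightarrow> k < 31 \<Longrightarrow> alpha u ! (31 * j + k) = alpha_letter (u ! j) ! k"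
proof (induction u arbitrary: j)
  case Nil
  then show ?case by simp
next
  case (Cons a u)
  then show ?case
    by (cases j) (auto simp: alpha_def nth_append)
qed

lemma length_alpha_iterate: "length ((alpha ^^ n) [0]) = 31 ^ n"
  by (induction n) (simp_all add: length_alpha)

lemma alpha_fixpointI:
  assumes prefixes: "\<forall>n i. i < length ((alpha ^^ n) [0]) \<longrightarrow> w i = (alpha ^^ n) [0] ! i"
  shows "alpha_fixpoint w"
proof
  fix j k :: nat assume "k < 31"
  let ?u = "(alpha ^^ j) [0]"
  have "j < 31 ^ j" by (induction j) auto
  then have j: "j < length ?u" by (simp add: length_alpha_iterate)
  then have "31 * j + k < length ((alpha ^^ Suc j) [0])"
    using \<open>k < 31\<close> by (simp add: length_alpha)
  then have "w (31 * j + k) = alpha ?u ! (31 * j + k)"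
    using prefixes[rule_format, of "31 * j + k" "Suc j"] by simp
  also have "\<dots> = alpha_letter (w j) ! k"
    using nth_alpha[OF j \<open>k < 31\<close>] prefixes j by simp
  finally show "w (31 * j + k) = alpha_letter (w j) ! k" .
qed

theorem mainTheorem10:
  fixes w :: "nat \<Rightarrow> nat"
  assumes fixpt: "\<forall>n i. i < length ((alpha ^^ n) [0]) \<longrightarrow> w i = ((alpha ^^ n) [0]) ! i"
  shows "(\<forall>a\<in>{0,1,2::nat}. rev (alpha [a]) = alpha [a])
    \<and> (let z = [2,1,0,2,0,1,0,2,1,2,0,1,2,1,0::nat] in alpha [0] = rev z @ [0] @ z)
    \<and> (\<forall>i p q. is_frac_power (factor_at w i p) p q \<longrightarrow> \<not> (real p / real q > 7 / 4))"
proof (intro conjI allI impI)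
  show "\<forall>a\<in>{0,1,2::nat}. rev (alpha [a]) = alpha [a]"
    and "let z = [2,1,0,2,0,1,0,2,1,2,0,1,2,1,0::nat] in alpha [0] = rev z @ [0] @ z"
    by (simp_all add: alpha_def alpha_letter_def)
next
  fix i p q
  assume "is_frac_power (factor_at w i p) p q"
  then have "periodic_factor w i p q" "1 \<le> q"
    by (auto simp: is_frac_power_def has_period_factor_at_iff)
  then have "4 * p \<le> 7 * q"
    using alpha_fixpoint.periodic_factor_length_bound[OF alpha_fixpointI[OF fixpt]] by blast
  then show "\<not> real p / real q > 7 / 4"
    using \<open>1 \<le> q\<close> by (simp add: divide_less_eq field_simps)
qed

end
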